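(* Let a domain $v$ be a triple $(\mu^{(v)}, f^{(v)}, g^{(v)})$ with $\mu^{(v)}$ a distribution on $\mathbb{R}^d$, $f^{(v)}:\mathbb{R}^d\to\mathbb{R}^{d'}$ and $g^{(v)}:\mathbb{R}^{d'}\to\mathcal{Y}$, and $h^{(v)}=g^{(v)}\circ f^{(v)}$. Let $u$ be the unseen domain and $s=1,\dots,S$ the seen domains. For $h=g\circ f$ define $R^{(v)}(h):=\mathbb{E}_{\bm{x}\sim\mu^{(v)}}[\ell(h(\bm{x}),h^{(v)}(\bm{x}))]$. Assume (i) $\ell$ is non-negative, symmetric, bounded by a finite positive number $L$, and satisfies the triangle inequality; and (ii) $f$ is invertible when restricted to the data manifold (the support of the input distributions). Then for all convex weights $\lambda^{(1)},\dots,\lambda^{(S)}$ (nonnegative, summing to one) and any such hypothesis $h=g\circ f$, \[ R^{(u)}(h)\le\sum_{s=1}^S\lambda^{(s)}R^{(s)}(h)+L\sum_{s=1}^S\lambda^{(s)}\|f_{\#}\mu^{(u)}-f_{\#}\mu^{(s)}\|_1+\sum_{s=1}^S\lambda^{(s)}\sigma^{(u,s)}, \] where $f_{\#}\mu^{(v)}$ is the pushforward of $\mu^{(v)}$ under $f$, $\|\cdot\|_1$ is the $L^1$ distance between densities, and $\sigma^{(u,s)}:=\min\{\mathbb{E}_{\bm{x}\sim\mu^{(u)}}[\ell(h^{(u)}(\bm{x}),h^{(s)}(\bm{x}))],\ \mathbb{E}_{\bm{x}\sim\mu^{(s)}}[\ell(h^{(u)}(\bm{x}),h^{(s)}(\b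m{x}))]\}$.
   Context: Domain generalization with $S$ seen domains and one unseen domain. *)

theory Defs
  imports "HOL-Probability.Probability"
begin

definition risk :: "('c \<Rightarrow> 'c \<Rightarrow> real) \<Rightarrow> 'a measure \<Rightarrow> ('a \<Rightarrow> 'c) \<Rightarrow> ('a \<Rightarrow> 'c) \<Rightarrow> real" where
  "risk loss mu hv h = (\<integral>x. loss (h x) (hv x) \<partial>mu)"

definition L1_dist :: "('b::euclidean_space \<Rightarrow> real) \<Rightarrow> ('b \<Rightarrow> real) \<Rightarrow> real" where
  "L1_dist p q = (\<integral>z. \<bar>p z - q z\<bar> \<partial>lborel)"

definition sigma_term :: "('c \<Rightarrow> 'c \<Rightarrow> real) \<Rightarrow> 'a measure \<Rightarrow> 'a measure \<Rightarrow> ('a \<Rightarrow> 'c) \<Rightarrow> ('a \<Rightarrow> 'c) \<Rightarrow> real" where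
  "sigma_term loss mu_u mu_s hu hs =
     min (\<integral>x. loss (hu x) (hs x) \<partial>mu_u) (\<integral>x. loss (hu x) (hs x) \<partial>mu_s)"

end

theory Submission
  imports Defs
begin

text \<open>Compare the unseen domain with each seen domain separately and average with the
  weights. Since \<open>f\<close> has a measurable left inverse on the data manifold, the expectation of
  any bounded function of the input can be computed in feature space against the density of the
  pushforward under \<open>f\<close>; hence replacing the unseen input distribution by a seen one costs at
  most \<open>L\<close> times the \<open>L\<^sup>1\<close> distance of the two densities. Passing from the unseen to the
  seen labelling function by the triangle inequality of the loss, either before or after this
  change of distribution, produces the two candidates for \<open>\<sigma>\<close>.\<close>

lemma integral_eq_integral_pushforward_density:
  fixes f :: "'a \<Rightarrow> 'b::euclidean_space" and phi :: "'a \<Rightarrow> real"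
  assumes f: "f \<in> mu \<rightarrow>\<^sub>M borel" and finv: "finv \<in> borel \<rightarrow>\<^sub>M mu"
    and left_inverse: "AE x in mu. finv (f x) = x"
    and p: "p \<in> borel_measurable borel" "\<And>z. 0 \<le> p z"
    and distr_f: "distr mu borel f = density lborel (\<lambda>z. ennreal (p z))"
    and phi: "phi \<in> borel_measurable mu"
  shows "(\<integral>x. phi x \<partial>mu) = (\<integral>z. p z * phi (finv z) \<partial>lborel)"
proof -
  have phi_finv: "(\<lambda>z. phi (finv z)) \<in> borel_measurable borel"
    using measurable_comp[OF finv phi] by (simp add: comp_def)
  have "(\<integral>x. phi x \<partial>mu) = (\<integral>x. phi (finv (f x)) \<partial>mu)"
    using left_inverse phi measurable_comp[OF f phi_finv]
    by (intro integral_cong_AE) (auto simp: comp_def)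
  also have "\<dots> = (\<integral>z. phi (finv z) \<partial>distr mu borel f)"
    by (rule integral_distr[symmetric, OF f phi_finv])
  also have "\<dots> = (\<integral>z. p z * phi (finv z) \<partial>lborel)"
    unfolding distr_f using integral_density[of "\<lambda>z. phi (finv z)" lborel p] phi_finv p by simp
  finally show ?thesis .
qed

lemma integrable_pushforward_density:
  fixes f :: "'a \<Rightarrow> 'b::euclidean_space"
  assumes "prob_space mu" and f: "f \<in> mu \<rightarrow>\<^sub>M borel"
    and p: "p \<in> borel_measurable borel" "\<And>z. 0 \<le> p z"
    and distr_f: "distr mu borel f = density lborel (\<lambda>z. ennreal (p z))"
  shows "integrable lborel p"
proof -
  have "prob_space (density lborel (\<lambda>z. ennreal (p z)))"
    using prob_space.prob_space_distr[OF \<open>prob_space mu\<close> f] distr_f by simp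
  then have "(\<integral>\<^sup>+z. ennreal (p z) \<partial>lborel) = ennreal 1"
    using prob_space.emeasure_space_1 p(1) by (fastforce simp: emeasure_density)
  then show ?thesis
    using p by (intro integrableI_nn_integral_finite) auto
qed

lemma integral_mult_le_integral_mult_add_L1:
  fixes psi :: "'b \<Rightarrow> real"
  assumes p1: "integrable N p1" and p2: "integrable N p2"
    and psi: "psi \<in> borel_measurable N" "\<And>z. 0 \<le> psi z" "\<And>z. psi z \<le> L"
  shows "(\<integral>z. p1 z * psi z \<partial>N) \<le> (\<integral>z. p2 z * psi z \<partial>N) + L * (\<integral>z. \<bar>p1 z - p2 z\<bar> \<partial>N)"
proof -
  have L: "0 \<le> L" using psi(2,3) order_trans by blast
  have integrable_mult: "integrable N (\<lambda>z. p z * psi z)" if "integrable N p" for p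
  proof (rule Bochner_Integration.integrable_bound[OF integrable_mult_left[OF that, of L]])
    show "(\<lambda>z. p z * psi z) \<in> borel_measurable N"
      using borel_measurable_integrable[OF that] psi(1) by simp
    show "AE z in N. norm (p z * psi z) \<le> norm (p z * L)"
    proof (rule AE_I2)
      fix z
      have "\<bar>psi z\<bar> \<le> \<bar>L\<bar>" using psi(2,3) L by simp
      then show "norm (p z * psi z) \<le> norm (p z * L)"
        by (simp add: abs_mult mult_left_mono)
    qed
  qed
  have "(\<integral>z. p1 z * psi z \<partial>N) - (\<integral>z. p2 z * psi z \<partial>N) = (\<integral>z. (p1 z - p2 z) * psi z \<partial>N)"
    using integrable_mult[OF p1] integrable_mult[OF p2] by (simp add: left_diff_distrib)
  also have "\<dots> \<le> (\<integral>z. L * \<bar>p1 z - p2 z\<bar> \<partial>N)"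
  proof (rule integral_mono)
    show "integrable N (\<lambda>z. (p1 z - p2 z) * psi z)"
      using integrable_mult[OF Bochner_Integration.integrable_diff[OF p1 p2]] .
    show "integrable N (\<lambda>z. L * \<bar>p1 z - p2 z\<bar>)" using p1 p2 by simp
    fix z
    have "(p1 z - p2 z) * psi z \<le> \<bar>p1 z - p2 z\<bar> * psi z"
      using psi(2) by (intro mult_right_mono) auto
    also have "\<dots> \<le> \<bar>p1 z - p2 z\<bar> * L"
      using psi(3) by (intro mult_left_mono) auto
    finally show "(p1 z - p2 z) * psi z \<le> L * \<bar>p1 z - p2 z\<bar>" by (simp add: mult.commute)
  qed
  finally show ?thesis by simp
qed

lemma integral_le_integral_add_L1_dist:
  fixes f :: "'a \<Rightarrow> 'b::euclidean_space" and phi :: "'a \<Rightarrow> real"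
  assumes "prob_space mu1" "prob_space mu2" and sets_eq: "sets mu2 = sets mu1"
    and f: "f \<in> mu1 \<rightarrow>\<^sub>M borel" and finv: "finv \<in> borel \<rightarrow>\<^sub>M mu1"
    and left_inverse: "AE x in mu1. finv (f x) = x" "AE x in mu2. finv (f x) = x"
    and p1: "p1 \<in> borel_measurable borel" "\<And>z. 0 \<le> p1 z"
      "distr mu1 borel f = density lborel (\<lambda>z. ennreal (p1 z))"
    and p2: "p2 \<in> borel_measurable borel" "\<And>z. 0 \<le> p2 z"
      "distr mu2 borel f = density lborel (\<lambda>z. ennreal (p2 z))"
    and phi: "phi \<in> borel_measurable mu1" "\<And>x. 0 \<le> phi x" "\<And>x. phi x \<le> L"
  shows "(\<integral>x. phi x \<partial>mu1) \<le> (\<integral>x. phi x \<partial>mu2) + L * L1_dist p1 p2"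
proof -
  note to_mu2 = measurable_cong_sets[OF sets_eq refl] measurable_cong_sets[OF refl sets_eq]
  have phi_finv: "(\<lambda>z. phi (finv z)) \<in> borel_measurable lborel"
    using measurable_comp[OF finv phi(1)] by (simp add: comp_def)
  show ?thesis
    unfolding L1_dist_def
      integral_eq_integral_pushforward_density[OF f finv left_inverse(1) p1 phi(1)]
      integral_eq_integral_pushforward_density[of f mu2, unfolded to_mu2, OF f finv
        left_inverse(2) p2 phi(1)]
    using integrable_pushforward_density[OF \<open>prob_space mu1\<close> f p1]
      integrable_pushforward_density[of mu2, unfolded to_mu2, OF \<open>prob_space mu2\<close> f p2]
    by (intro integral_mult_le_integral_mult_add_L1 phi_finv phi(2,3))
qed

locale bounded_pseudometric_loss =
  fixes loss :: "'c \<Rightarrow> 'c \<Rightarrow> real" and L :: real and Y :: "'c measure"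
  assumes nonneg: "\<And>a b. 0 \<le> loss a b"
    and sym: "\<And>a b. loss a b = loss b a"
    and bounded: "\<And>a b. loss a b \<le> L"
    and triangle: "\<And>a b c. loss a c \<le> loss a b + loss b c"
    and measurable_loss: "(\<lambda>(a, b). loss a b) \<in> borel_measurable (Y \<Otimes>\<^sub>M Y)"
begin

lemma borel_measurable_loss_comp:
  assumes "a \<in> N \<rightarrow>\<^sub>M Y" "b \<in> N \<rightarrow>\<^sub>M Y"
  shows "(\<lambda>x. loss (a x) (b x)) \<in> borel_measurable N"
  using measurable_comp[OF measurable_Pair[OF assms] measurable_loss] by (simp add: comp_def)

lemma integrable_loss_comp:
  assumes "finite_measure N" "a \<in> N \<rightarrow>\<^sub>M Y" "b \<in> N \<rightarrow>\<^sub>M Y"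
  shows "integrable N (\<lambda>x. loss (a x) (b x))"
  using assms nonneg bounded borel_measurable_loss_comp
  by (intro finite_measure.integrable_const_bound[where B=L]) auto

lemma integral_loss_triangle:
  assumes "finite_measure N" "a \<in> N \<rightarrow>\<^sub>M Y" "b \<in> N \<rightarrow>\<^sub>M Y" "c \<in> N \<rightarrow>\<^sub>M Y"
  shows "(\<integral>x. loss (a x) (c x) \<partial>N) \<le> (\<integral>x. loss (a x) (b x) \<partial>N) + (\<integral>x. loss (b x) (c x) \<partial>N)"
proof -
  have "(\<integral>x. loss (a x) (c x) \<partial>N) \<le> (\<integral>x. loss (a x) (b x) + loss (b x) (c x) \<partial>N)"
    using assms triangle by (intro integral_mono integrable_loss_comp Bochner_Integration.integrable_add)
  also have "\<dots> = (\<integral>x. loss (a x) (b x) \<partial>N) + (\<integral>x. loss (b x) (c x) \<partial>N)"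
    using assms by (intro Bochner_Integration.integral_add integrable_loss_comp)
  finally show ?thesis .
qed

lemma risk_le_risk_add_shift_add_sigma_term:
  assumes "finite_measure mu_u" "finite_measure mu_s" and sets_eq: "sets mu_s = sets mu_u"
    and h: "h \<in> mu_u \<rightarrow>\<^sub>M Y" and hu: "hu \<in> mu_u \<rightarrow>\<^sub>M Y" and hs: "hs \<in> mu_u \<rightarrow>\<^sub>M Y"
    and shift_hs: "(\<integral>x. loss (h x) (hs x) \<partial>mu_u) \<le> (\<integral>x. loss (h x) (hs x) \<partial>mu_s) + D"
    and shift_hu: "(\<integral>x. loss (h x) (hu x) \<partial>mu_u) \<le> (\<integral>x. loss (h x) (hu x) \<partial>mu_s) + D"
  shows "risk loss mu_u hu h \<le> risk loss mu_s hs h + D + sigma_term loss mu_u mu_s hu hs"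
proof -
  note to_mu_s = measurable_cong_sets[OF sets_eq refl]
  have sym_integral: "(\<integral>x. loss (hs x) (hu x) \<partial>N) = (\<integral>x. loss (hu x) (hs x) \<partial>N)" for N
    using sym by simp
  have "(\<integral>x. loss (h x) (hu x) \<partial>mu_u) \<le> (\<integral>x. loss (h x) (hs x) \<partial>mu_u) + (\<integral>x. loss (hs x) (hu x) \<partial>mu_u)"
    using integral_loss_triangle[OF \<open>finite_measure mu_u\<close> h hs hu] .
  moreover have "(\<integral>x. loss (h x) (hu x) \<partial>mu_s) \<le> (\<integral>x. loss (h x) (hs x) \<partial>mu_s) + (\<integral>x. loss (hs x) (hu x) \<partial>mu_s)"
    using integral_loss_triangle[of mu_s, unfolded to_mu_s, OF \<open>finite_measure mu_s\<close> h hs hu] .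
  ultimately show ?thesis
    using shift_hs shift_hu unfolding risk_def sigma_term_def sym_integral by linarith
qed

lemma risk_le_risk_add_L1_dist_add_sigma_term:
  fixes f :: "'a \<Rightarrow> 'b::euclidean_space"
  assumes "prob_space mu_u" "prob_space mu_s" and sets_eq: "sets mu_s = sets mu_u"
    and f: "f \<in> mu_u \<rightarrow>\<^sub>M borel" and finv: "finv \<in> borel \<rightarrow>\<^sub>M mu_u"
    and left_inverse: "AE x in mu_u. finv (f x) = x" "AE x in mu_s. finv (f x) = x"
    and p_u: "p_u \<in> borel_measurable borel" "\<And>z. 0 \<le> p_u z"
      "distr mu_u borel f = density lborel (\<lambda>z. ennreal (p_u z))"
    and p_s: "p_s \<in> borel_measurable borel" "\<And>z. 0 \<le> p_s z"
      "distr mu_s borel f = density lborel (\<lambda>z. ennreal (p_s z))"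
    and h: "h \<in> mu_u \<rightarrow>\<^sub>M Y" and hu: "hu \<in> mu_u \<rightarrow>\<^sub>M Y" and hs: "hs \<in> mu_u \<rightarrow>\<^sub>M Y"
  shows "risk loss mu_u hu h \<le> risk loss mu_s hs h + L * L1_dist p_u p_s + sigma_term loss mu_u mu_s hu hs"
proof -
  have shift: "(\<integral>x. loss (a x) (b x) \<partial>mu_u) \<le> (\<integral>x. loss (a x) (b x) \<partial>mu_s) + L * L1_dist p_u p_s"
    if "a \<in> mu_u \<rightarrow>\<^sub>M Y" "b \<in> mu_u \<rightarrow>\<^sub>M Y" for a b
    by (rule integral_le_integral_add_L1_dist[OF assms(1-13) borel_measurable_loss_comp[OF that]
          nonneg bounded])
  show ?thesis
    using assms(1,2) by (intro risk_le_risk_add_shift_add_sigma_term[OF _ _ sets_eq h hu hs]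
        shift h hu hs prob_space.finite_measure)
qed

end

lemma AE_left_inverse_of_emeasure_eq_1:
  assumes "prob_space mu" "M \<in> sets mu" "emeasure mu M = 1" "\<forall>x\<in>M. finv (f x) = x"
  shows "AE x in mu. finv (f x) = x"
proof -
  interpret prob_space mu by fact
  have "AE x in mu. x \<in> M"
    using assms(2,3) by (simp add: AE_in_set_eq_1 emeasure_eq_measure)
  then show ?thesis using assms(4) by auto
qed

lemma le_convex_combination:
  fixes x :: real
  assumes "\<forall>s\<in>A. 0 \<le> lam s" "sum lam A = 1" "\<And>s. s \<in> A \<Longrightarrow> x \<le> F s"
  shows "x \<le> (\<Sum>s\<in>A. lam s * F s)"
proof -
  have "x = (\<Sum>s\<in>A. lam s * x)" using assms(2) by (simp add: sum_distrib_right[symmetric])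
  also have "\<dots> \<le> (\<Sum>s\<in>A. lam s * F s)" using assms(1,3) by (intro sum_mono mult_left_mono) auto
  finally show ?thesis .
qed

theorem lemma2:
  fixes loss :: "'c \<Rightarrow> 'c \<Rightarrow> real" and L :: real and Y :: "'c measure"
    and mu_u :: "'a::euclidean_space measure" and f_u :: "'a \<Rightarrow> 'b::euclidean_space" and g_u :: "'b \<Rightarrow> 'c"
    and mu_s :: "nat \<Rightarrow> 'a measure" and f_s :: "nat \<Rightarrow> 'a \<Rightarrow> 'b" and g_s :: "nat \<Rightarrow> 'b \<Rightarrow> 'c"
    and S :: nat and lam :: "nat \<Rightarrow> real"
    and f :: "'a \<Rightarrow> 'b" and g :: "'b \<Rightarrow> 'c"
    and M :: "'a set" and p_u :: "'b \<Rightarrow> real" and p_s :: "nat \<Rightarrow> 'b \<Rightarrow> real"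
  assumes loss_nonneg: "\<And>a b. 0 \<le> loss a b"
    and loss_sym: "\<And>a b. loss a b = loss b a"
    and L_pos: "0 < L"
    and loss_bdd: "\<And>a b. loss a b \<le> L"
    and loss_tri: "\<And>a b c. loss a c \<le> loss a b + loss b c"
    and loss_meas: "(\<lambda>(a, b). loss a b) \<in> borel_measurable (Y \<Otimes>\<^sub>M Y)"
    and dom_u: "prob_space mu_u" "sets mu_u = sets borel"
      "f_u \<in> borel \<rightarrow>\<^sub>M borel" "g_u \<in> borel \<rightarrow>\<^sub>M Y"
    and dom_s: "\<forall>s\<in>{1..S}. prob_space (mu_s s) \<and> sets (mu_s s) = sets borel \<and>
                   f_s s \<in> borel \<rightarrow>\<^sub>M borel \<and> g_s s \<in> borel \<rightarrow>\<^sub>M Y"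
    and hyp: "f \<in> borel \<rightarrow>\<^sub>M borel" "g \<in> borel \<rightarrow>\<^sub>M Y"
    and manifold: "M \<in> sets borel" "emeasure mu_u M = 1" "\<forall>s\<in>{1..S}. emeasure (mu_s s) M = 1"
    and f_inv: "inj_on f M" "\<exists>finv \<in> borel \<rightarrow>\<^sub>M borel. \<forall>x\<in>M. finv (f x) = x"
    and dens_u: "p_u \<in> borel_measurable borel" "\<forall>z. 0 \<le> p_u z"
      "distr mu_u borel f = density lborel (\<lambda>z. ennreal (p_u z))"
    and dens_s: "\<forall>s\<in>{1..S}. p_s s \<in> borel_measurable borel \<and> (\<forall>z. 0 \<le> p_s s z) \<and>
                   distr (mu_s s) borel f = density lborel (\<lambda>z. ennreal (p_s s z))"
    and weights: "\<forall>s\<in>{1..S}. 0 \<le> lam s" "(\<Sum>s=1..S. lam s) = 1"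
  shows "risk loss mu_u (g_u \<circ> f_u) (g \<circ> f)
         \<le> (\<Sum>s=1..S. lam s * risk loss (mu_s s) (g_s s \<circ> f_s s) (g \<circ> f))
           + L * (\<Sum>s=1..S. lam s * L1_dist p_u (p_s s))
           + (\<Sum>s=1..S. lam s * sigma_term loss mu_u (mu_s s) (g_u \<circ> f_u) (g_s s \<circ> f_s s))"
proof -
  interpret bounded_pseudometric_loss loss L Y
    using loss_nonneg loss_sym loss_bdd loss_tri loss_meas by unfold_locales
  obtain finv where finv: "finv \<in> borel \<rightarrow>\<^sub>M borel" and left_inverse: "\<forall>x\<in>M. finv (f x) = x"
    using f_inv(2) by blast
  note borel_sets_u = measurable_cong_sets[OF dom_u(2) refl] measurable_cong_sets[OF refl dom_u(2)]
  have measurable_u: "f \<in> mu_u \<rightarrow>\<^sub>M borel" "finv \<in> borel \<rightarrow>\<^sub>M mu_u" "g \<circ> f \<in> mu_u \<rightarrow>\<^sub>M Y"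
      "g_u \<circ> f_u \<in> mu_u \<rightarrow>\<^sub>M Y"
    unfolding borel_sets_u using finv hyp dom_u by (auto intro: measurable_comp)
  have M_u: "M \<in> sets mu_u" using manifold(1) dom_u(2) by simp
  have per_domain: "risk loss mu_u (g_u \<circ> f_u) (g \<circ> f) \<le> risk loss (mu_s s) (g_s s \<circ> f_s s) (g \<circ> f)
      + L * L1_dist p_u (p_s s) + sigma_term loss mu_u (mu_s s) (g_u \<circ> f_u) (g_s s \<circ> f_s s)"
    if "s \<in> {1..S}" for s
  proof -
    have mu_s: "prob_space (mu_s s)" "sets (mu_s s) = sets mu_u" "emeasure (mu_s s) M = 1"
      and p_s: "p_s s \<in> borel_measurable borel" "\<And>z. 0 \<le> p_s s z"
        "distr (mu_s s) borel f = density lborel (\<lambda>z. ennreal (p_s s z))"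
      and h_s: "g_s s \<circ> f_s s \<in> mu_u \<rightarrow>\<^sub>M Y"
      using dom_s dens_s manifold(3) dom_u(2) \<open>s \<in> {1..S}\<close>
      by (auto simp: borel_sets_u intro: measurable_comp)
    show ?thesis
      using AE_left_inverse_of_emeasure_eq_1[where f=f, OF dom_u(1) M_u manifold(2) left_inverse]
        AE_left_inverse_of_emeasure_eq_1[where f=f, OF mu_s(1) _ mu_s(3) left_inverse] M_u mu_s(2)
      by (intro risk_le_risk_add_L1_dist_add_sigma_term[OF dom_u(1) mu_s(1,2) measurable_u(1,2) _ _
            dens_u(1) dens_u(2)[rule_format] dens_u(3) p_s measurable_u(3,4) h_s]) auto
  qed
  have "risk loss mu_u (g_u \<circ> f_u) (g \<circ> f) \<le> (\<Sum>s=1..S. lam s *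
      (risk loss (mu_s s) (g_s s \<circ> f_s s) (g \<circ> f) + L * L1_dist p_u (p_s s)
       + sigma_term loss mu_u (mu_s s) (g_u \<circ> f_u) (g_s s \<circ> f_s s)))"
    by (rule le_convex_combination[OF weights per_domain])
  also have "\<dots> = (\<Sum>s=1..S. lam s * risk loss (mu_s s) (g_s s \<circ> f_s s) (g \<circ> f))
      + L * (\<Sum>s=1..S. lam s * L1_dist p_u (p_s s))
      + (\<Sum>s=1..S. lam s * sigma_term loss mu_u (mu_s s) (g_u \<circ> f_u) (g_s s \<circ> f_s s))"
    unfolding distrib_left sum.distrib sum_distrib_left by (simp only: mult.left_commute)
  finally show ?thesis .
qed

end
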